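(* Let $x_1,x_2,y_1,y_2\in\mathbb{R}$, $d>0$, and $$f(x)=\big((x-x_1)^2+y_1^2+d^2\big)\big((x-x_2)^2+y_2^2+d^2\big),\quad x\in\mathbb{R}.$$ If $|y_1|\le|y_2|$, then the optimal (minimizing) antenna location $x^*$ of $f$ satisfies $|x^*-x_1|\le|x^*-x_2|$ (i.e., it is closer to user 1); otherwise ($|y_1|>|y_2|$), $|x^*-x_1|\ge|x^*-x_2|$. (Here $x^*$ is understood as a global minimizer of $f$ that can be chosen with the stated property.)
   Context: $f$ is the high-SNR approximation of the two-user TDMA sum-throughput maximization objective for a pinching antenna at $(x,0,d)$ serving users at $(x_1,y_1,0)$ and $(x_2,y_2,0)$: maximizing throughput is approximated by minimizing $f$. *)

theory Defs
  imports Complex_Main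
begin

text \<open>High-SNR TDMA objective for a pinching antenna at (x,0,d) and users at (x1,y1,0), (x2,y2,0).\<close>
definition pa_obj :: "real \<Rightarrow> real \<Rightarrow> real \<Rightarrow> real \<Rightarrow> real \<Rightarrow> real \<Rightarrow> real" where
  "pa_obj x1 y1 x2 y2 d x = ((x - x1)^2 + y1^2 + d^2) * ((x - x2)^2 + y2^2 + d^2)"

end

theory Submission
  imports Defs "HOL-Analysis.Analysis"
begin

text \<open>
  The objective f grows at least like (x - x1)^2 (y2^2 + d^2), so it attains a global minimum.
  Reflecting x about the midpoint (x1 + x2) / 2 swaps the two squared distances, and
  f x - f (x1 + x2 - x) = ((x - x1)^2 - (x - x2)^2) (y2^2 - y1^2).
  Hence if the user with the smaller offset |y| is farther from a minimiser, the reflected point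
  is no worse, so it is again a minimiser, and it is closer to that user.
\<close>

lemma continuous_attains_global_inf:
  fixes f :: "'a::heine_borel \<Rightarrow> real"
  assumes cont: "continuous_on UNIV f"
    and outside: "\<And>x. dist a x > r \<Longrightarrow> f a < f x"
  shows "\<exists>m. \<forall>x. f m \<le> f x"
proof -
  have "r \<ge> 0"
  proof (rule ccontr)
    assume "\<not> r \<ge> 0"
    then have "f a < f a"
      by (intro outside) simp
    then show False
      by simp
  qed
  then have "cball a r \<noteq> {}"
    by simp
  then obtain m where min_on_ball: "\<forall>y\<in>cball a r. f m \<le> f y"
    using continuous_attains_inf[OF compact_cball _ continuous_on_subset[OF cont subset_UNIV]]
    by blast
  have "f m \<le> f x" for x
  proof (cases "x \<in> cball a r")
    case False
    then have "f a < f x"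
      by (intro outside) simp
    moreover have "f m \<le> f a"
      using min_on_ball \<open>r \<ge> 0\<close> by simp
    ultimately show ?thesis
      by linarith
  qed (use min_on_ball in blast)
  then show ?thesis
    by blast
qed

lemma pa_obj_swap_users: "pa_obj x1 y1 x2 y2 d x = pa_obj x2 y2 x1 y1 d x"
  unfolding pa_obj_def by (simp add: mult.commute)

lemma pa_obj_ge: "(x - x1)^2 * (y2^2 + d^2) \<le> pa_obj x1 y1 x2 y2 d x"
proof -
  have "(x - x1)^2 * (y2^2 + d^2) \<le> ((x - x1)^2 + y1^2 + d^2) * (y2^2 + d^2)"
    by (intro mult_right_mono) auto
  also have "\<dots> \<le> ((x - x1)^2 + y1^2 + d^2) * ((x - x2)^2 + y2^2 + d^2)"
    by (intro mult_left_mono) auto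
  finally show ?thesis
    unfolding pa_obj_def .
qed

lemma pa_obj_attains_min:
  assumes "d > 0"
  shows "\<exists>m. \<forall>x. pa_obj x1 y1 x2 y2 d m \<le> pa_obj x1 y1 x2 y2 d x"
proof (rule continuous_attains_global_inf)
  show "continuous_on UNIV (pa_obj x1 y1 x2 y2 d)"
    unfolding pa_obj_def by (intro continuous_intros)
  define b where "b = y2^2 + d^2"
  have "b > 0"
    using assms by (simp add: b_def add_nonneg_pos)
  show "pa_obj x1 y1 x2 y2 d x1 < pa_obj x1 y1 x2 y2 d x"
    if "dist x1 x > sqrt (pa_obj x1 y1 x2 y2 d x1 / b)" for x
  proof -
    have "pa_obj x1 y1 x2 y2 d x1 / b < (x - x1)^2"
      using that by (metis real_sqrt_abs real_sqrt_less_iff dist_real_def abs_minus_commute)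
    then have "pa_obj x1 y1 x2 y2 d x1 < (x - x1)^2 * b"
      using \<open>b > 0\<close> by (simp add: pos_divide_less_eq)
    also have "\<dots> \<le> pa_obj x1 y1 x2 y2 d x"
      unfolding b_def by (rule pa_obj_ge)
    finally show ?thesis .
  qed
qed

lemma pa_obj_reflect:
  "pa_obj x1 y1 x2 y2 d (x1 + x2 - x)
     = pa_obj x1 y1 x2 y2 d x - ((x - x1)^2 - (x - x2)^2) * (y2^2 - y1^2)"
  unfolding pa_obj_def by (simp add: power2_eq_square algebra_simps)

lemma pa_obj_min_closer_to_first:
  assumes "d > 0" and "\<bar>y1\<bar> \<le> \<bar>y2\<bar>"
  shows "\<exists>xs. (\<forall>x. pa_obj x1 y1 x2 y2 d xs \<le> pa_obj x1 y1 x2 y2 d x) \<and> \<bar>xs - x1\<bar> \<le> \<bar>xs - x2\<bar>"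
proof -
  obtain m where min: "\<forall>x. pa_obj x1 y1 x2 y2 d m \<le> pa_obj x1 y1 x2 y2 d x"
    using pa_obj_attains_min[OF \<open>d > 0\<close>] by blast
  show ?thesis
  proof (cases "\<bar>m - x1\<bar> \<le> \<bar>m - x2\<bar>")
    case True
    with min show ?thesis
      by blast
  next
    case False
    define m' where "m' = x1 + x2 - m"
    have "(m - x2)^2 \<le> (m - x1)^2"
      using False by (simp add: abs_le_square_iff)
    moreover have "y1^2 \<le> y2^2"
      using assms(2) by (simp add: abs_le_square_iff)
    ultimately have "((m - x1)^2 - (m - x2)^2) * (y2^2 - y1^2) \<ge> 0"
      by (intro mult_nonneg_nonneg) simp_all
    then have "pa_obj x1 y1 x2 y2 d m' \<le> pa_obj x1 y1 x2 y2 d m"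
      unfolding m'_def pa_obj_reflect by linarith
    moreover have "\<bar>m' - x1\<bar> \<le> \<bar>m' - x2\<bar>"
      using False by (simp add: m'_def abs_minus_commute)
    ultimately show ?thesis
      using min order_trans by blast
  qed
qed

theorem lemma4:
  fixes x1 x2 y1 y2 d :: real
  assumes "d > 0"
  shows "\<exists>xs. (\<forall>x. pa_obj x1 y1 x2 y2 d xs \<le> pa_obj x1 y1 x2 y2 d x) \<and>
           (if \<bar>y1\<bar> \<le> \<bar>y2\<bar> then \<bar>xs - x1\<bar> \<le> \<bar>xs - x2\<bar>
            else \<bar>xs - x1\<bar> \<ge> \<bar>xs - x2\<bar>)"
proof (cases "\<bar>y1\<bar> \<le> \<bar>y2\<bar>")
  case True
  then show ?thesis
    using pa_obj_min_closer_to_first[OF assms] by simp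
next
  case False
  then have "\<bar>y2\<bar> \<le> \<bar>y1\<bar>"
    by simp
  with False show ?thesis
    using pa_obj_min_closer_to_first[OF assms, of y2 y1 x2 x1] by (simp add: pa_obj_swap_users)
qed

end
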